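(* For any online learning algorithm with prior knowledge of the horizon $T$, the delay $\tau$ and a number $\bar V\ge V^{\tau+1}_T$, there exists a sequence of linear losses $f_t(x)=\langle g_t,x\rangle$ such that, if the feedback is subject to constant delay $\tau$ (the feedback $g_t$ becomes available only after $\tau$ further rounds), the regret $\sum_{t=1}^T\langle g_t,x_t-p\rangle$ of the algorithm on this sequence with respect to some vector $p$ with $\|p-x_1\|\le1$ is $\Omega(\sqrt{\tau\bar V})$.
   Context: Online linear optimization in a Euclidean space (unconstrained), where $x_t$ denotes the point played at round $t$ and $x_1$ the initial point. Convention $g_t=0$ for $t\le0$. The $(\tau+1)$-variation is $V^{\tau+1}_T=\sum_{t=1}^T\|g_t-g_{t-\tau-1}\|^2$. *)

theory Defs
  imports "HOL-Analysis.Analysis"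
begin

text \<open>A deterministic online algorithm (which may depend on the known T, tau, Vbar) is a map
  A t obs giving the point x_t played at round t from the list of feedback gradients
  observed so far. Under constant delay tau, at round t only g_1, ..., g_{t-tau-1} are
  available. Rounds are indexed 1, 2, ...; the value g 0 is never used.\<close>

definition delayed_play :: "(nat \<Rightarrow> 'a list \<Rightarrow> 'a) \<Rightarrow> nat \<Rightarrow> (nat \<Rightarrow> 'a) \<Rightarrow> nat \<Rightarrow> 'a" where
  "delayed_play A \<tau> g t = A t (map g [1..<t - \<tau>])"

definition delayed_regret ::
  "(nat \<Rightarrow> 'a::real_inner list \<Rightarrow> 'a) \<Rightarrow> nat \<Rightarrow> nat \<Rightarrow> (nat \<Rightarrow> 'a) \<Rightarrow> 'a \<Rightarrow> real" where
  "delayed_regret A \<tau> T g p = (\<Sum>t=1..T. inner (g t) (delayed_play A \<tau> g t - p))"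

definition variation :: "nat \<Rightarrow> nat \<Rightarrow> (nat \<Rightarrow> 'a::real_normed_vector) \<Rightarrow> real" where
  "variation \<tau> T g = (\<Sum>t=1..T. (norm (g t - (if t > \<tau> + 1 then g (t - \<tau> - 1) else 0)))\<^sup>2)"

end

theory Submission
  imports Defs
begin

text \<open>During the first \<open>\<tau> + 1\<close> rounds the learner has received no feedback, so its plays
  \<open>x\<^sub>1, \<dots>, x\<^sub>\<tau>\<^sub>+\<^sub>1\<close> are fixed in advance. The adversary sends the gradient \<open>\<epsilon> u\<close> in
  these rounds and \<open>0\<close> afterwards, which costs \<open>(\<tau>+1)\<close>-variation at most \<open>2(\<tau>+1)\<epsilon>\<^sup>2\<close>. With the
  sign of the unit vector \<open>u\<close> chosen so that \<open>\<langle>u, \<Sum>\<^sub>t (x\<^sub>t - x\<^sub>1)\<rangle> \<ge> 0\<close> and the comparator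
  \<open>p = x\<^sub>1 - u\<close>, every blind round costs at least \<open>\<epsilon>\<close>, so the regret is at least
  \<open>(\<tau>+1)\<epsilon> = sqrt((\<tau>+1) Vbar / 2)\<close> for \<open>\<epsilon> = sqrt(Vbar / (2\<tau>+2))\<close>.\<close>

definition burst :: "nat \<Rightarrow> 'a::zero \<Rightarrow> nat \<Rightarrow> 'a" where
  "burst \<tau> v t = (if t \<le> \<tau> + 1 then v else 0)"

lemma delayed_play_no_feedback:
  assumes "t \<le> \<tau> + 1"
  shows "delayed_play A \<tau> g t = A t []"
  using assms unfolding delayed_play_def by simp

lemma variation_burst_le:
  "variation \<tau> T (burst \<tau> v) \<le> (2 * real \<tau> + 2) * (norm v)\<^sup>2"
proof -
  let ?N = "2 * \<tau> + 2"
  have "variation \<tau> T (burst \<tau> v) \<le> (\<Sum>t=1..T. if t \<le> ?N then (norm v)\<^sup>2 else 0)"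
    unfolding variation_def by (rule sum_mono) (auto simp: burst_def)
  also have "\<dots> = real (card {t \<in> {1..T}. t \<le> ?N}) * (norm v)\<^sup>2"
    by (simp add: sum.inter_filter[symmetric])
  also have "\<dots> \<le> real ?N * (norm v)\<^sup>2"
  proof -
    have "card {t \<in> {1..T}. t \<le> ?N} \<le> card {1..?N}"
      by (rule card_mono) auto
    then show ?thesis by (intro mult_right_mono) auto
  qed
  finally show ?thesis by (simp add: algebra_simps)
qed

lemma delayed_regret_burst:
  assumes "\<tau> < T"
  shows "delayed_regret A \<tau> T (burst \<tau> v) p = (\<Sum>t=1..\<tau>+1. inner v (A t [] - p))"
proof -
  have "delayed_regret A \<tau> T (burst \<tau> v) p
      = (\<Sum>t=1..\<tau>+1. inner (burst \<tau> v t) (delayed_play A \<tau> (burst \<tau> v) t - p))"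
    unfolding delayed_regret_def
    by (rule sum.mono_neutral_right) (use assms in \<open>auto simp: burst_def\<close>)
  also have "\<dots> = (\<Sum>t=1..\<tau>+1. inner v (A t [] - p))"
    by (rule sum.cong) (auto simp: burst_def delayed_play_no_feedback)
  finally show ?thesis .
qed

lemma delayed_regret_burst_ge:
  assumes "\<tau> < T" and "0 \<le> \<epsilon>" and "norm u = 1"
    and "0 \<le> inner u (\<Sum>t=1..\<tau>+1. A t [] - A 1 [])"
  shows "delayed_regret A \<tau> T (burst \<tau> (\<epsilon> *\<^sub>R u)) (A 1 [] - u) \<ge> \<epsilon> * (real \<tau> + 1)"
proof -
  have "delayed_regret A \<tau> T (burst \<tau> (\<epsilon> *\<^sub>R u)) (A 1 [] - u)
      = (\<Sum>t=1..\<tau>+1. \<epsilon> * (inner u (A t [] - A 1 []) + 1))"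
    using assms(1,3)
    by (simp add: delayed_regret_burst inner_diff_right algebra_simps flip: power2_norm_eq_inner)
  also have "\<dots> = \<epsilon> * (inner u (\<Sum>t=1..\<tau>+1. A t [] - A 1 []) + (real \<tau> + 1))"
    by (simp only: inner_sum_right sum_distrib_left sum.distrib distrib_left) (simp add: algebra_simps)
  also have "\<dots> \<ge> \<epsilon> * (real \<tau> + 1)"
    using assms(2,4) by (intro mult_left_mono) linarith+
  finally show ?thesis .
qed

lemma exists_unit_inner_nonneg:
  fixes w :: "'a::euclidean_space"
  obtains u where "norm u = 1" and "0 \<le> inner u w"
proof -
  obtain b :: 'a where b: "b \<in> Basis"
    using nonempty_Basis by blast
  show ?thesis
  proof (cases "0 \<le> inner b w")
    case True
    then show ?thesis using b by (intro that[of b]) auto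
  next
    case False
    then show ?thesis using b by (intro that[of "- b"]) auto
  qed
qed

lemma half_sqrt_mult_le:
  fixes V :: real
  assumes "0 \<le> V"
  shows "sqrt (real n * V) / 2 \<le> sqrt (V / (2 * real n + 2)) * (real n + 1)"
proof -
  have "sqrt (real n * V) / 2 = sqrt (real n * V / 4)"
    by (simp add: real_sqrt_divide)
  also have "\<dots> \<le> sqrt (V / (2 * real n + 2) * (real n + 1)\<^sup>2)"
    using assms by (intro real_sqrt_le_mono) (simp add: field_simps power2_eq_square mult_left_mono)
  also have "\<dots> = sqrt (V / (2 * real n + 2)) * (real n + 1)"
    by (simp only: real_sqrt_mult real_sqrt_abs)
  finally show ?thesis .
qed

theorem proposition6:
  shows "\<exists>c>0. \<forall>(T::nat) (\<tau>::nat) (Vbar::real) (A :: nat \<Rightarrow> 'a::euclidean_space list \<Rightarrow> 'a).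
     \<tau> < T \<longrightarrow> 0 \<le> Vbar \<longrightarrow>
     (\<exists>(g :: nat \<Rightarrow> 'a) (p :: 'a).
        variation \<tau> T g \<le> Vbar \<and>
        norm (p - delayed_play A \<tau> g 1) \<le> 1 \<and>
        delayed_regret A \<tau> T g p \<ge> c * sqrt (real \<tau> * Vbar))"
proof (intro exI[of _ "1/2"] conjI allI impI)
  fix T \<tau> :: nat and Vbar :: real and A :: "nat \<Rightarrow> 'a list \<Rightarrow> 'a"
  assume "\<tau> < T" and "0 \<le> Vbar"
  define \<epsilon> where "\<epsilon> = sqrt (Vbar / (2 * real \<tau> + 2))"
  have "0 \<le> \<epsilon>"
    using \<open>0 \<le> Vbar\<close> by (simp add: \<epsilon>_def)
  obtain u :: 'a where u: "norm u = 1" and u_plays: "0 \<le> inner u (\<Sum>t=1..\<tau>+1. A t [] - A 1 [])"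
    using exists_unit_inner_nonneg by blast
  define g where "g = burst \<tau> (\<epsilon> *\<^sub>R u)"
  define p where "p = A 1 [] - u"
  have "delayed_regret A \<tau> T g p \<ge> \<epsilon> * (real \<tau> + 1)"
    unfolding g_def p_def using \<open>\<tau> < T\<close> \<open>0 \<le> \<epsilon>\<close> u u_plays by (rule delayed_regret_burst_ge)
  moreover have "variation \<tau> T g \<le> Vbar"
    using variation_burst_le[of \<tau> T "\<epsilon> *\<^sub>R u"] \<open>0 \<le> Vbar\<close> u by (simp add: g_def \<epsilon>_def)
  moreover have "norm (p - delayed_play A \<tau> g 1) = 1"
    using u by (simp add: p_def delayed_play_no_feedback)
  ultimately show "\<exists>g p. variation \<tau> T g \<le> Vbar \<and> norm (p - delayed_play A \<tau> g 1) \<le> 1 \<and>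
      1/2 * sqrt (real \<tau> * Vbar) \<le> delayed_regret A \<tau> T g p"
    using half_sqrt_mult_le[OF \<open>0 \<le> Vbar\<close>, of \<tau>] unfolding \<epsilon>_def
    by (intro exI[of _ g] exI[of _ p]) auto
qed simp

end
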